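(* Let $X=\mathbb{R}^2$, $A=\mathbb{R}\times\{0\}$ and $B=\operatorname{epi}(|\cdot|+1)=\{(s,t)\in\mathbb{R}^2: t\ge |s|+1\}$, and let $T:=\mathrm{Id}-P_A+P_BR_A$. Then $A\cap B=\varnothing$, and for every starting point $x\in[-1,1]\times\{0\}$ and every $n\in\{1,2,\ldots\}$ one has $T^n x=(0,n)\in B$; in particular $\|P_BT^nx\|=n\to\infty$, so $(P_BT^nx)_{n}$ is unbounded.
   Context: $P_C$ is the Euclidean projection onto a closed convex set $C$, and $R_C=2P_C-\mathrm{Id}$. *)

theory Defs
  imports "HOL-Analysis.Analysis"
begin

definition proj :: "'a::euclidean_space set \<Rightarrow> 'a \<Rightarrow> 'a" where
  "proj C x = closest_point C x"

definition reflector :: "'a::euclidean_space set \<Rightarrow> 'a \<Rightarrow> 'a" where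
  "reflector C x = 2 *\<^sub>R proj C x - x"

end

theory Submission
  imports Defs
begin

text \<open>The projections onto A and B are explicit: P_A (s,t) = (s,0), and every point (s,c) with
  c \<le> 1 - |s| lies in the normal cone of B at its vertex, so P_B (s,c) = (0,1). Hence
  T (s,t) = (0,t) + P_B (s,-t) = (0, t + 1) whenever |s| \<le> t + 1. Starting from (a,0) with
  |a| \<le> 1 the iterates therefore climb the axis of B one unit per step, T^n x = (0,n), and
  (0,n) \<in> B is fixed by P_B.\<close>

lemma closest_point_eqI:
  assumes "q \<in> S" and "\<And>y. y \<in> S \<Longrightarrow> y \<noteq> q \<Longrightarrow> dist p q < dist p y"
  shows "closest_point S p = q"
  unfolding closest_point_def
proof (rule some_equality)
  show "q \<in> S \<and> (\<forall>y\<in>S. dist p q \<le> dist p y)"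
    using assms by (metis order.order_iff_strict)
next
  fix x assume "x \<in> S \<and> (\<forall>y\<in>S. dist p x \<le> dist p y)"
  then show "x = q"
    using assms by (metis not_le)
qed

lemma dist_Pair_less_iff:
  fixes a b c d e f :: real
  shows "dist (a, b) (c, d) < dist (a, b) (e, f) \<longleftrightarrow>
    (a - c)\<^sup>2 + (b - d)\<^sup>2 < (a - e)\<^sup>2 + (b - f)\<^sup>2"
  by (simp add: dist_Pair_Pair dist_real_def)

lemma proj_horizontal_axis:
  fixes a b :: real
  shows "proj {p. snd p = 0} (a, b) = (a, 0)"
  unfolding proj_def
proof (rule closest_point_eqI)
  fix y assume "y \<in> {p. snd p = (0::real)}" "y \<noteq> (a, 0)"
  then obtain s where "y = (s, 0)" "s \<noteq> a" by (cases y) auto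
  then show "dist (a, b) (a, 0) < dist (a, b) y"
    by (simp add: dist_Pair_less_iff)
qed simp

lemma reflector_horizontal_axis:
  fixes a b :: real
  shows "reflector {p. snd p = 0} (a, b) = (a, - b)"
  by (simp add: reflector_def proj_horizontal_axis scaleR_2)

lemma proj_epigraph_abs_vertex:
  fixes a c :: real
  assumes "c \<le> 1 - \<bar>a\<bar>"
  shows "proj {p. snd p \<ge> \<bar>fst p\<bar> + 1} (a, c) = (0, 1)"
  unfolding proj_def
proof (rule closest_point_eqI)
  fix y assume "y \<in> {p. snd p \<ge> \<bar>fst p\<bar> + (1::real)}" "y \<noteq> (0, 1)"
  then obtain s t where y: "y = (s, t)" "t \<ge> \<bar>s\<bar> + 1" "(s, t) \<noteq> (0, 1)"
    by (cases y) auto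
  have "0 < s\<^sup>2 + (t - 1)\<^sup>2"
    using y(3) by (simp add: sum_power2_gt_zero_iff)
  \<comment> \<open>the inner product of (a, c - 1) with (s, t - 1) is nonpositive\<close>
  moreover have "a * s \<le> (1 - c) * (t - 1)"
  proof -
    have "a * s \<le> \<bar>a\<bar> * \<bar>s\<bar>" by (metis abs_ge_self abs_mult)
    also have "\<dots> \<le> (1 - c) * (t - 1)" using assms y(2) by (intro mult_mono) auto
    finally show ?thesis .
  qed
  ultimately show "dist (a, c) (0, 1) < dist (a, c) y"
    unfolding y(1) dist_Pair_less_iff by (simp add: power2_eq_square algebra_simps)
qed simp

lemma douglas_rachford_step:
  fixes a b :: real
  assumes "\<bar>a\<bar> \<le> b + 1"
  shows "(a, b) - proj {p. snd p = 0} (a, b)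
      + proj {p. snd p \<ge> \<bar>fst p\<bar> + 1} (reflector {p. snd p = 0} (a, b)) = (0, b + 1)"
  using assms by (simp add: proj_horizontal_axis reflector_horizontal_axis proj_epigraph_abs_vertex)

lemma funpow_Suc_climbs_axis:
  fixes T :: "real \<times> real \<Rightarrow> real \<times> real"
  assumes step: "\<And>a b. \<bar>a\<bar> \<le> b + 1 \<Longrightarrow> T (a, b) = (0, b + 1)" and "\<bar>a\<bar> \<le> 1"
  shows "(T ^^ Suc n) (a, 0) = (0, real (Suc n))"
proof (induction n)
  case 0
  show ?case using step assms(2) by simp
next
  case (Suc n)
  then show ?case using step[of 0 "real (Suc n)"] by simp
qed

lemma not_bounded_range_if_norm_tendsto_at_top:
  fixes f :: "nat \<Rightarrow> 'a::real_normed_vector"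
  assumes "filterlim (\<lambda>n. norm (f n)) at_top sequentially"
  shows "\<not> bounded (range f)"
proof
  assume "bounded (range f)"
  then obtain M where "\<And>n. norm (f n) \<le> M"
    unfolding bounded_iff by blast
  moreover have "eventually (\<lambda>n. M < norm (f n)) sequentially"
    using assms by (simp add: filterlim_at_top_dense)
  ultimately show False
    by (metis (mono_tags) eventually_sequentially le_refl not_le)
qed

theorem mainTheorem3:
  fixes A B :: "(real \<times> real) set" and T :: "real \<times> real \<Rightarrow> real \<times> real"
  assumes A_def: "A = {p. snd p = 0}"
    and B_def: "B = {p. snd p \<ge> \<bar>fst p\<bar> + 1}"
    and T_def: "T = (\<lambda>x. x - proj A x + proj B (reflector A x))"
  shows "A \<inter> B = {} \<and>
    (\<forall>x \<in> {-1..1} \<times> {0}.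
       (\<forall>n::nat. n \<ge> 1 \<longrightarrow> (T ^^ n) x = (0, real n) \<and> (0, real n) \<in> B) \<and>
       (\<forall>n::nat. n \<ge> 1 \<longrightarrow> norm (proj B ((T ^^ n) x)) = real n) \<and>
       filterlim (\<lambda>n. norm (proj B ((T ^^ n) x))) at_top sequentially \<and>
       \<not> bounded (range (\<lambda>n. proj B ((T ^^ n) x))))"
proof -
  have axis_in_B: "(0, real n) \<in> B" if "n \<ge> 1" for n
    using B_def that by simp
  have iterates: "(T ^^ n) (a, 0) = (0, real n)" if "\<bar>a\<bar> \<le> 1" "n \<ge> 1" for a n
    using funpow_Suc_climbs_axis[of T a "n - 1"] douglas_rachford_step that
    by (simp add: A_def B_def T_def)
  have norms: "norm (proj B ((T ^^ n) (a, 0))) = real n" if "\<bar>a\<bar> \<le> 1" "n \<ge> 1" for a n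
    using iterates[OF that] closest_point_self[OF axis_in_B[OF that(2)]] by (simp add: proj_def)
  have to_infinity: "filterlim (\<lambda>n. norm (proj B ((T ^^ n) (a, 0)))) at_top sequentially"
    if "\<bar>a\<bar> \<le> 1" for a
    using filterlim_real_sequentially
    by (rule filterlim_cong[THEN iffD1, rotated 3])
       (auto simp: eventually_sequentially intro!: exI[of _ 1] norms[OF that, symmetric])
  have "A \<inter> B = {}"
    using A_def B_def by auto
  moreover have "\<not> bounded (range (\<lambda>n. proj B ((T ^^ n) (a, 0))))" if "\<bar>a\<bar> \<le> 1" for a
    using not_bounded_range_if_norm_tendsto_at_top to_infinity[OF that] .
  ultimately show ?thesis
    using axis_in_B iterates norms to_infinity by (auto simp: abs_le_iff)
qed

end
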